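(* Let $s$ be an integer such that $3s^2-4s+4$ is a perfect square, let $F_s(t)= t^4 + (4s^3 - 4s^2 + 8s - 4)t^3 + (-6s^2 - 6)t^2 + 4t + 1$, and let $K_s$ be its splitting field over $\mathbb{Q}$. Put $$f=\frac{s+\sqrt{3s^2-4s+4}}{2},\qquad g=\frac{s-\sqrt{3s^2-4s+4}}{2}$$ (integers), and let $M$ be the linear fractional transformation $$M\theta=\frac{f\theta-1}{\frac{f^2+g^2}{2}\theta-g}.$$ Then $\mathrm{Gal}(K_s/\mathbb{Q})$ is cyclic of order $4$, $K_s=\mathbb{Q}(r)$ for any root $r$ of $F_s$, and there is a generator $\sigma$ of $\mathrm{Gal}(K_s/\mathbb{Q})$ such that $\sigma(r)=Mr$ for every root $r$ of $F_s$. *)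

theory Defs
  imports Complex_Main "HOL-Computational_Algebra.Polynomial"
begin

definition is_subfield :: "complex set \<Rightarrow> bool" where
  "is_subfield K \<longleftrightarrow> 0 \<in> K \<and> 1 \<in> K \<and>
     (\<forall>x\<in>K. \<forall>y\<in>K. x + y \<in> K \<and> x * y \<in> K) \<and>
     (\<forall>x\<in>K. - x \<in> K) \<and> (\<forall>x\<in>K. x \<noteq> 0 \<longrightarrow> inverse x \<in> K)"

definition gen_field :: "complex set \<Rightarrow> complex set" where
  "gen_field S = \<Inter> {K. is_subfield K \<and> S \<subseteq> K}"

definition splitting_field :: "complex poly \<Rightarrow> complex set" where
  "splitting_field p = gen_field {z. poly p z = 0}"

text \<open>Gal(K/Q): field automorphisms of K (they automatically fix Q), represented as
  functions that are the identity outside K; group operation is composition.\<close>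
definition Gal :: "complex set \<Rightarrow> (complex \<Rightarrow> complex) set" where
  "Gal K = {\<sigma>. bij_betw \<sigma> K K \<and>
     (\<forall>x\<in>K. \<forall>y\<in>K. \<sigma> (x + y) = \<sigma> x + \<sigma> y \<and> \<sigma> (x * y) = \<sigma> x * \<sigma> y) \<and>
     (\<forall>x. x \<notin> K \<longrightarrow> \<sigma> x = x)}"

definition F :: "int \<Rightarrow> complex poly" where
  "F s = [: 1, 4, of_int (-6*s^2 - 6), of_int (4*s^3 - 4*s^2 + 8*s - 4), 1 :]"

end

(* Write k = sqrt(3s^2 - 4s + 4), so f = (s + k)/2, g = (s - k)/2 and (f^2 + g^2)/2 = c := s^2 - s + 1,
   and let M have matrix A = [f, -1; c, -g].  Clearing denominators, (c t - g)^4 F_s(M t) = -(k^4/4) F_s(t),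
   so M permutes the roots of F_s.  Moreover A^2 = (k/2) N with N = [s, -2; 2c, -s] and N^2 = -k^2 I, so
   M^4 fixes every root, while a root fixed by M or by M^2 would satisfy c t^2 - s t + 1 = 0.  This is
   impossible because F_s is irreducible over Q: it has no root +-1, and a factorisation into integer
   quadratics forces s = 1 (then 3s^2 - 4s + 4 = 3 is not a square) or s = 0 (then a difference of
   coefficients would have square 32).  So M cycles the four roots, every root r generates all of them,
   and K_s = Q(r).  An automorphism of Q(r) is determined by the image of r, so there are exactly four;
   the one sending r to M r commutes with M, whose coefficients are rational, hence acts as M on all
   roots and generates the group. *)

theory Submission
  imports Defs "HOL-Computational_Algebra.Fundamental_Theorem_Algebra"
    "Berlekamp_Zassenhaus.Reconstruction"
begin

lemma subfield_zero: "is_subfield K \<Longrightarrow> 0 \<in> K"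
  and subfield_one: "is_subfield K \<Longrightarrow> 1 \<in> K"
  and subfield_add: "is_subfield K \<Longrightarrow> x \<in> K \<Longrightarrow> y \<in> K \<Longrightarrow> x + y \<in> K"
  and subfield_mult: "is_subfield K \<Longrightarrow> x \<in> K \<Longrightarrow> y \<in> K \<Longrightarrow> x * y \<in> K"
  and subfield_uminus: "is_subfield K \<Longrightarrow> x \<in> K \<Longrightarrow> - x \<in> K"
  and subfield_inverse: "is_subfield K \<Longrightarrow> x \<in> K \<Longrightarrow> inverse x \<in> K"
  by (auto simp: is_subfield_def)

lemma subfield_divide: "is_subfield K \<Longrightarrow> x \<in> K \<Longrightarrow> y \<in> K \<Longrightarrow> x / y \<in> K"
  by (simp add: divide_inverse subfield_mult subfield_inverse)

lemma Rats_subset_subfield: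
  assumes K: "is_subfield K"
  shows "\<rat> \<subseteq> K"
proof
  have nat: "of_nat n \<in> K" for n
    using K by (induction n) (simp_all add: subfield_zero subfield_one subfield_add)
  have int: "of_int n \<in> K" for n
  proof (cases "n \<ge> 0")
    case True
    then show ?thesis using nat[of "nat n"] by simp
  next
    case False
    then show ?thesis using subfield_uminus[OF K nat[of "nat (- n)"]] by simp
  qed
  fix x :: complex
  assume "x \<in> \<rat>"
  then obtain a b where "x = of_int a / of_int b" by (elim Rats_cases')
  then show "x \<in> K" using subfield_divide[OF K int int] by simp
qed

lemma gen_field_least: "is_subfield K \<Longrightarrow> S \<subseteq> K \<Longrightarrow> gen_field S \<subseteq> K"
  unfolding gen_field_def by blast

lemma gen_field_mono: "S \<subseteq> T \<Longrightarrow> gen_field S \<subseteq> gen_field T"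
  unfolding gen_field_def by blast

lemma subset_gen_field: "S \<subseteq> gen_field S"
  unfolding gen_field_def by blast

section \<open>Moebius transformations\<close>

definition moebius :: "'a :: field \<Rightarrow> 'a \<Rightarrow> 'a \<Rightarrow> 'a \<Rightarrow> 'a \<Rightarrow> 'a" where
  "moebius a b c d z = (a * z + b) / (c * z + d)"

lemma moebius_moebius:
  fixes a b c d a' b' c' d' z :: "'a :: field"
  assumes "c' * z + d' \<noteq> 0"
  shows "moebius a b c d (moebius a' b' c' d' z) =
         moebius (a * a' + b * c') (a * b' + b * d') (c * a' + d * c') (c * b' + d * d') z"
proof -
  let ?N = "a' * z + b'" and ?D = "c' * z + d'"
  have num: "a * (?N / ?D) + b = (a * ?N + b * ?D) / ?D"
    and den: "c * (?N / ?D) + d = (c * ?N + d * ?D) / ?D"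
    using assms by (simp_all add: field_simps)
  have "moebius a b c d (moebius a' b' c' d' z) = ((a * ?N + b * ?D) / ?D) / ((c * ?N + d * ?D) / ?D)"
    by (simp only: moebius_def num den)
  also have "\<dots> = (a * ?N + b * ?D) / (c * ?N + d * ?D)"
    using assms by (simp only: divide_divide_times_eq mult.commute[of _ ?D] mult_divide_mult_cancel_left_if if_False)
  also have "\<dots> = moebius (a * a' + b * c') (a * b' + b * d') (c * a' + d * c') (c * b' + d * d') z"
    by (simp add: moebius_def algebra_simps)
  finally show ?thesis .
qed

lemma moebius_scale:
  fixes l a b c d :: "'a :: field"
  assumes "l \<noteq> 0"
  shows "moebius (l * a) (l * b) (l * c) (l * d) = moebius a b c d"
proof
  fix z
  have "(l * a * z + l * b) / (l * c * z + l * d) = (l * (a * z + b)) / (l * (c * z + d))"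
    by (simp add: algebra_simps)
  then show "moebius (l * a) (l * b) (l * c) (l * d) z = moebius a b c d z"
    using assms by (simp add: moebius_def)
qed

lemma moebius_fixed_point:
  fixes a b c d z :: "'a :: field"
  assumes "c * z + d \<noteq> 0" "moebius a b c d z = z"
  shows "c * z^2 + (d - a) * z - b = 0"
proof -
  have "a * z + b = z * (c * z + d)" using assms by (simp add: moebius_def divide_eq_eq)
  then show ?thesis by (simp add: algebra_simps power2_eq_square)
qed

lemma Rats_affine_nonzero:
  fixes c d z :: complex
  assumes "z \<notin> \<rat>" "c \<in> \<rat>" "d \<in> \<rat>" "c \<noteq> 0"
  shows "c * z + d \<noteq> 0"
proof
  assume "c * z + d = 0"
  then have "z = - d / c" using assms(4) by (simp add: field_simps add_eq_0_iff2)
  then show False using assms by simp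
qed

lemma subfield_moebius:
  assumes K: "is_subfield K" and "a \<in> \<rat>" "b \<in> \<rat>" "c \<in> \<rat>" "d \<in> \<rat>" "z \<in> K"
  shows "moebius a b c d z \<in> K"
proof -
  have "a * z + b \<in> K" "c * z + d \<in> K"
    using assms Rats_subset_subfield[OF K] by (auto intro: subfield_add subfield_mult[OF K])
  then show ?thesis unfolding moebius_def by (rule subfield_divide[OF K])
qed

definition poly_rat :: "rat poly \<Rightarrow> complex \<Rightarrow> complex" where
  "poly_rat p = poly (map_poly of_rat p)"

interpretation of_rat_poly_hom: map_poly_comm_ring_hom "of_rat :: rat \<Rightarrow> complex" ..

lemma poly_rat_simps [simp]:
  "poly_rat 0 z = 0"
  "poly_rat 1 z = 1"
  "poly_rat (pCons a p) z = of_rat a + z * poly_rat p z"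
  "poly_rat (p + q) z = poly_rat p z + poly_rat q z"
  "poly_rat (p - q) z = poly_rat p z - poly_rat q z"
  "poly_rat (- p) z = - poly_rat p z"
  "poly_rat (p * q) z = poly_rat p z * poly_rat q z"
  by (simp_all add: poly_rat_def of_rat_poly_hom.hom_add of_rat_poly_hom.hom_minus
      of_rat_poly_hom.hom_uminus of_rat_poly_hom.hom_mult of_rat_hom.map_poly_pCons_hom)

lemma poly_rat_in_subfield:
  assumes K: "is_subfield K" and "z \<in> K"
  shows "poly_rat p z \<in> K"
proof (induction p)
  case (pCons a p)
  have "of_rat a \<in> K" using Rats_subset_subfield[OF K] by auto
  with pCons assms show ?case by (simp add: subfield_add subfield_mult K)
qed (simp add: subfield_zero K)

context
  fixes K :: "complex set" and \<sigma> :: "complex \<Rightarrow> complex"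
  assumes K: "is_subfield K" and \<sigma>: "\<sigma> \<in> Gal K"
begin

lemma Gal_add: "x \<in> K \<Longrightarrow> y \<in> K \<Longrightarrow> \<sigma> (x + y) = \<sigma> x + \<sigma> y"
  using \<sigma> by (simp add: Gal_def)

lemma Gal_mult: "x \<in> K \<Longrightarrow> y \<in> K \<Longrightarrow> \<sigma> (x * y) = \<sigma> x * \<sigma> y"
  using \<sigma> by (simp add: Gal_def)

lemma Gal_zero: "\<sigma> 0 = 0"
  using Gal_add[of 0 0] subfield_zero[OF K] by simp

lemma Gal_one: "\<sigma> 1 = 1"
proof -
  have K01: "0 \<in> K" "1 \<in> K" using K by (simp_all add: subfield_zero subfield_one)
  have "\<sigma> 1 \<noteq> \<sigma> 0" using \<sigma> K01 by (auto simp: Gal_def bij_betw_def dest: inj_onD)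
  moreover have "\<sigma> 1 = \<sigma> 1 * \<sigma> 1" using Gal_mult[of 1 1] K01 by simp
  ultimately show ?thesis using Gal_zero by simp
qed

lemma Gal_uminus: "x \<in> K \<Longrightarrow> \<sigma> (- x) = - \<sigma> x"
  using Gal_add[of x "- x"] Gal_zero subfield_uminus[OF K] by (simp add: add.commute eq_neg_iff_add_eq_0)

lemma Gal_inverse: "x \<in> K \<Longrightarrow> \<sigma> (inverse x) = inverse (\<sigma> x)"
proof (cases "x = 0")
  case False
  assume x: "x \<in> K"
  with False have "\<sigma> x * \<sigma> (inverse x) = 1"
    using Gal_mult[of x "inverse x"] Gal_one subfield_inverse[OF K] by simp
  then show ?thesis by (simp add: inverse_unique)
qed (simp add: Gal_zero)

lemma Gal_divide: "x \<in> K \<Longrightarrow> y \<in> K \<Longrightarrow> \<sigma> (x / y) = \<sigma> x / \<sigma> y"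
  using Gal_mult[of x "inverse y"] Gal_inverse[of y] subfield_inverse[OF K]
  by (simp add: divide_inverse)

lemma Gal_fixes_Rats:
  assumes "x \<in> \<rat>"
  shows "\<sigma> x = x"
proof -
  have nat: "\<sigma> (of_nat n) = of_nat n" for n
  proof (induction n)
    case (Suc n)
    then show ?case
      using Gal_add[of 1 "of_nat n"] Gal_one Rats_subset_subfield[OF K] by (simp add: subset_iff)
  qed (simp add: Gal_zero)
  have int: "\<sigma> (of_int n) = of_int n" for n
    using nat[of "nat n"] nat[of "nat (- n)"] Gal_uminus[of "of_nat (nat (- n))"]
      Rats_subset_subfield[OF K] by (cases "n \<ge> 0") (auto simp: subset_iff)
  obtain a b where "x = of_int a / of_int b" using assms by (elim Rats_cases')
  then show ?thesis using Gal_divide int Rats_subset_subfield[OF K] by (simp add: subset_iff)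
qed

lemma Gal_moebius:
  assumes "a \<in> \<rat>" "b \<in> \<rat>" "c \<in> \<rat>" "d \<in> \<rat>" "z \<in> K"
  shows "\<sigma> (moebius a b c d z) = moebius a b c d (\<sigma> z)"
proof -
  have "u * z + v \<in> K" if "u \<in> \<rat>" "v \<in> \<rat>" for u v
    using that assms(5) Rats_subset_subfield[OF K] by (auto intro: subfield_add subfield_mult K)
  moreover have "\<sigma> (u * z + v) = u * \<sigma> z + v" if "u \<in> \<rat>" "v \<in> \<rat>" for u v
  proof -
    have "u \<in> K" "v \<in> K" using that Rats_subset_subfield[OF K] by auto
    then have "\<sigma> (u * z + v) = \<sigma> u * \<sigma> z + \<sigma> v"
      using assms(5) by (simp add: Gal_add Gal_mult subfield_mult[OF K])
    then show ?thesis using that by (simp add: Gal_fixes_Rats)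
  qed
  ultimately show ?thesis using assms by (simp add: moebius_def Gal_divide)
qed

lemma Gal_poly_rat: "z \<in> K \<Longrightarrow> \<sigma> (poly_rat p z) = poly_rat p (\<sigma> z)"
proof (induction p)
  case (pCons a p)
  have "of_rat a \<in> K" "z * poly_rat p z \<in> K"
    using Rats_subset_subfield[OF K] poly_rat_in_subfield[OF K pCons.prems] pCons.prems
    by (auto intro: subfield_mult K)
  then show ?case
    using pCons Gal_add Gal_mult poly_rat_in_subfield[OF K] Gal_fixes_Rats[of "of_rat a"] by simp
qed (simp add: Gal_zero)

end

lemma Gal_id: "id \<in> Gal K"
  by (simp add: Gal_def)

lemma Gal_comp:
  assumes "\<sigma> \<in> Gal K" "\<tau> \<in> Gal K"
  shows "\<sigma> \<circ> \<tau> \<in> Gal K"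
proof -
  have "\<tau> x \<in> K" if "x \<in> K" for x using assms(2) that by (auto simp: Gal_def bij_betw_def)
  then show ?thesis using assms by (auto simp: Gal_def intro: bij_betw_trans)
qed

lemma Gal_funpow: "\<sigma> \<in> Gal K \<Longrightarrow> \<sigma> ^^ n \<in> Gal K"
  by (induction n) (simp_all add: Gal_id Gal_comp)

section \<open>The field generated by a root of an irreducible polynomial\<close>

context
  fixes P :: "rat poly" and r :: complex
  assumes irreducible: "irreducible P" and root: "poly_rat P r = 0"
begin

lemma poly_rat_root_invertible:
  assumes "\<not> P dvd p"
  shows "\<exists>q. poly_rat q r * poly_rat p r = 1"
proof -
  have "gcd P p = 1"
    using prime_elem_imp_coprime[OF field_poly_irreducible_imp_prime[OF irreducible] assms]
    by (simp add: coprime_iff_gcd_eq_1)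
  then have "fst (bezout_coefficients P p) * P + snd (bezout_coefficients P p) * p = 1"
    by (simp add: bezout_coefficients_fst_snd)
  from arg_cong[OF this, of "\<lambda>q. poly_rat q r"] show ?thesis using root by auto
qed

lemma poly_rat_root_eq_0_iff: "poly_rat p r = 0 \<longleftrightarrow> P dvd p"
  using poly_rat_root_invertible[of p] root by (cases "P dvd p") (auto elim!: dvdE)

lemma degree_le_if_poly_rat_root: "poly_rat p r = 0 \<Longrightarrow> p \<noteq> 0 \<Longrightarrow> degree P \<le> degree p"
  by (simp add: poly_rat_root_eq_0_iff dvd_imp_degree_le)

lemma poly_rat_conjugate_eq:
  assumes "poly_rat P y = 0" "poly_rat p r = poly_rat q r"
  shows "poly_rat p y = poly_rat q y"
proof -
  have "P dvd p - q" using assms(2) by (simp add: poly_rat_root_eq_0_iff[symmetric])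
  then obtain t where "p - q = P * t" by (elim dvdE)
  then have "poly_rat (p - q) y = 0" using assms(1) by simp
  then show ?thesis by simp
qed

lemma is_subfield_range_poly_rat: "is_subfield (range (\<lambda>p. poly_rat p r))"
  unfolding is_subfield_def
proof (intro conjI ballI impI)
  show "0 \<in> range (\<lambda>p. poly_rat p r)" "1 \<in> range (\<lambda>p. poly_rat p r)"
    by (metis poly_rat_simps(1) rangeI, metis poly_rat_simps(2) rangeI)
  fix x y assume "x \<in> range (\<lambda>p. poly_rat p r)" "y \<in> range (\<lambda>p. poly_rat p r)"
  then show "x + y \<in> range (\<lambda>p. poly_rat p r)" "x * y \<in> range (\<lambda>p. poly_rat p r)"
    by (auto simp flip: poly_rat_simps)
next
  fix x assume x: "x \<in> range (\<lambda>p. poly_rat p r)"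
  then show "- x \<in> range (\<lambda>p. poly_rat p r)" by (auto simp flip: poly_rat_simps)
  assume "x \<noteq> 0"
  with x obtain p q where "x = poly_rat p r" "poly_rat q r * x = 1"
    using poly_rat_root_invertible poly_rat_root_eq_0_iff by blast
  then show "inverse x \<in> range (\<lambda>p. poly_rat p r)" by (metis inverse_unique mult.commute rangeI)
qed

lemma root_field_eq_range_poly_rat: "gen_field {r} = range (\<lambda>p. poly_rat p r)"
proof
  have "r = poly_rat [:0, 1:] r" by simp
  then show "gen_field {r} \<subseteq> range (\<lambda>p. poly_rat p r)"
    by (intro gen_field_least is_subfield_range_poly_rat) blast
  show "range (\<lambda>p. poly_rat p r) \<subseteq> gen_field {r}"
    unfolding gen_field_def using poly_rat_in_subfield by blast
qed

lemma is_subfield_root_field: "is_subfield (gen_field {r})"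
  using is_subfield_range_poly_rat by (simp add: root_field_eq_range_poly_rat)

end

section \<open>Automorphisms of a normal root field\<close>

text \<open>The automorphism of \<open>\<rat>(r)\<close> sending \<open>p(r)\<close> to \<open>p(y)\<close>; it is well defined when \<open>r\<close>
  and \<open>y\<close> are roots of the same irreducible polynomial.\<close>

definition root_aut :: "complex \<Rightarrow> complex \<Rightarrow> complex \<Rightarrow> complex" where
  "root_aut r y z = (if z \<in> gen_field {r} then poly_rat (SOME p. z = poly_rat p r) y else z)"

context
  fixes P :: "rat poly" and r :: complex
  assumes irreducible: "irreducible P" and root: "poly_rat P r = 0"
begin

lemma root_aut_poly_rat:
  assumes "poly_rat P y = 0"
  shows "root_aut r y (poly_rat p r) = poly_rat p y"
proof -
  let ?q = "SOME q. poly_rat p r = poly_rat q r"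
  have "poly_rat p r = poly_rat ?q r" by (rule someI) (rule refl)
  then have "poly_rat ?q y = poly_rat p y"
    using poly_rat_conjugate_eq[OF irreducible root assms] by metis
  then show ?thesis
    by (simp add: root_aut_def root_field_eq_range_poly_rat[OF irreducible root])
qed

lemma root_aut_root: "poly_rat P y = 0 \<Longrightarrow> root_aut r y r = y"
  using root_aut_poly_rat[of y "[:0, 1:]"] by simp

lemma Gal_root_field_maps_root:
  assumes "\<sigma> \<in> Gal (gen_field {r})"
  shows "poly_rat P (\<sigma> r) = 0"
  using Gal_poly_rat[OF is_subfield_root_field[OF irreducible root] assms, of r P]
    Gal_zero[OF is_subfield_root_field[OF irreducible root] assms] root subset_gen_field
  by auto

lemma Gal_root_field_eq_root_aut:
  assumes \<sigma>: "\<sigma> \<in> Gal (gen_field {r})"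
  shows "\<sigma> = root_aut r (\<sigma> r)"
proof
  fix z
  show "\<sigma> z = root_aut r (\<sigma> r) z"
  proof (cases "z \<in> gen_field {r}")
    case True
    then obtain p where "z = poly_rat p r"
      by (auto simp: root_field_eq_range_poly_rat[OF irreducible root])
    moreover have "r \<in> gen_field {r}" using subset_gen_field by blast
    ultimately show ?thesis
      using Gal_poly_rat[OF is_subfield_root_field[OF irreducible root] \<sigma>]
        root_aut_poly_rat[OF Gal_root_field_maps_root[OF \<sigma>]] by simp
  next
    case False
    then show ?thesis using \<sigma> by (simp add: Gal_def root_aut_def)
  qed
qed

lemma root_aut_in_Gal:
  assumes y: "poly_rat P y = 0" and normal: "gen_field {y} = gen_field {r}"
  shows "root_aut r y \<in> Gal (gen_field {r})"
  unfolding Gal_def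
proof (intro CollectI conjI ballI allI impI)
  note range_r = root_field_eq_range_poly_rat[OF irreducible root]
  have image: "root_aut r y ` gen_field {r} = gen_field {r}"
    using normal root_field_eq_range_poly_rat[OF irreducible y]
    by (simp add: range_r image_image root_aut_poly_rat[OF y])
  have "inj_on (root_aut r y) (gen_field {r})"
  proof (rule inj_onI)
    fix a b assume "a \<in> gen_field {r}" "b \<in> gen_field {r}" and eq: "root_aut r y a = root_aut r y b"
    then obtain p q where pq: "a = poly_rat p r" "b = poly_rat q r" by (auto simp: range_r)
    with eq have "poly_rat p y = poly_rat q y" by (simp add: root_aut_poly_rat[OF y])
    then have "poly_rat p r = poly_rat q r" by (rule poly_rat_conjugate_eq[OF irreducible y root])
    with pq show "a = b" by simp
  qed
  with image show "bij_betw (root_aut r y) (gen_field {r}) (gen_field {r})"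
    by (simp add: bij_betw_def)
  fix a b assume "a \<in> gen_field {r}" "b \<in> gen_field {r}"
  then obtain p q where "a = poly_rat p r" "b = poly_rat q r" by (auto simp: range_r)
  then show "root_aut r y (a + b) = root_aut r y a + root_aut r y b"
    and "root_aut r y (a * b) = root_aut r y a * root_aut r y b"
    using root_aut_poly_rat[OF y, of "p + q"] root_aut_poly_rat[OF y, of "p * q"]
    by (simp_all add: root_aut_poly_rat[OF y])
next
  fix z assume "z \<notin> gen_field {r}"
  then show "root_aut r y z = z" by (simp add: root_aut_def)
qed

lemma card_Gal_root_field:
  assumes normal: "\<And>y. poly_rat P y = 0 \<Longrightarrow> gen_field {y} = gen_field {r}"
  shows "card (Gal (gen_field {r})) = card {y. poly_rat P y = 0}"
proof -
  have "Gal (gen_field {r}) = root_aut r ` {y. poly_rat P y = 0}"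
  proof
    show "Gal (gen_field {r}) \<subseteq> root_aut r ` {y. poly_rat P y = 0}"
    proof
      fix \<sigma> assume "\<sigma> \<in> Gal (gen_field {r})"
      then show "\<sigma> \<in> root_aut r ` {y. poly_rat P y = 0}"
        using Gal_root_field_eq_root_aut Gal_root_field_maps_root
        by (intro image_eqI[where x = "\<sigma> r"]) simp_all
    qed
    show "root_aut r ` {y. poly_rat P y = 0} \<subseteq> Gal (gen_field {r})"
      using root_aut_in_Gal[OF _ normal] by blast
  qed
  moreover have "inj_on (root_aut r) {y. poly_rat P y = 0}"
  proof (rule inj_onI)
    fix x y assume x: "x \<in> {y. poly_rat P y = 0}" and y: "y \<in> {y. poly_rat P y = 0}"
      and eq: "root_aut r x = root_aut r y"
    have "x = root_aut r x r" using x by (simp add: root_aut_root)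
    also have "\<dots> = y" using y by (simp add: eq root_aut_root)
    finally show "x = y" .
  qed
  ultimately show ?thesis by (simp add: card_image)
qed

end

section \<open>Irreducibility of \<open>F\<^sub>s\<close>\<close>

definition F_int :: "int \<Rightarrow> int poly" where
  "F_int s = [:1, 4, -6 * s^2 - 6, 4 * s^3 - 4 * s^2 + 8 * s - 4, 1:]"

definition F_rat :: "int \<Rightarrow> rat poly" where
  "F_rat s = map_poly of_int (F_int s)"

lemma poly_F_eq_poly_rat: "poly (F s) = poly_rat (F_rat s)"
  by (simp add: fun_eq_iff F_def F_rat_def F_int_def of_int_hom.map_poly_pCons_hom
      of_rat_add of_rat_mult of_rat_diff of_rat_power of_rat_minus)

lemma coeff_F_int:
  "coeff (F_int s) 0 = 1" "coeff (F_int s) 1 = 4" "coeff (F_int s) 2 = -6 * s^2 - 6"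
  "coeff (F_int s) 3 = 4 * s^3 - 4 * s^2 + 8 * s - 4" "coeff (F_int s) 4 = 1"
  by (simp_all add: F_int_def numeral_eq_Suc)

lemma degree_F_int: "degree (F_int s) = 4"
  by (simp add: F_int_def)

lemma degree_F_rat: "degree (F_rat s) = 4"
  by (simp add: F_rat_def degree_F_int)

lemma no_square_between_consecutive_squares:
  fixes n x :: int
  assumes "0 \<le> n" "n^2 < x^2" "x^2 < (n + 1)^2"
  shows False
proof -
  have "n < \<bar>x\<bar>" using power2_less_imp_less[of n "\<bar>x\<bar>"] assms by simp
  moreover have "\<bar>x\<bar> < n + 1" using power2_less_imp_less[of "\<bar>x\<bar>" "n + 1"] assms by simp
  ultimately show False by linarith
qed

lemma int_le_square: "(s :: int) \<le> s^2"
proof (cases "s \<le> 0")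
  case False
  then show ?thesis by (simp add: power2_eq_square mult_le_cancel_left1)
qed (use zero_le_power2[of s] in linarith)

lemma F_int_no_unit_root: "poly (F_int s) 1 \<noteq> 0" "poly (F_int s) (-1) \<noteq> 0"
proof
  assume "poly (F_int s) 1 = 0"
  then have "s * (2 * s^2 - 5 * s + 4) = 2"
    by (simp add: F_int_def algebra_simps power2_eq_square power3_eq_cube)
  then have "s dvd 2" by (metis dvd_triv_left)
  then have "\<bar>s\<bar> \<le> 2" using dvd_imp_le_int[of 2 s] by simp
  then have "s \<in> {-2, -1, 0, 1, 2}" by auto
  then show False using \<open>poly (F_int s) 1 = 0\<close> by (auto simp: F_int_def)
next
  have "poly (F_int s) (-1) = -2 * (2 * s + 1) * (s^2 + 2)"
    by (simp add: F_int_def algebra_simps power2_eq_square power3_eq_cube)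
  moreover have "2 * s + 1 \<noteq> 0" by presburger
  moreover have "s^2 + 2 \<noteq> 0" using zero_le_power2[of s] by linarith
  ultimately show "poly (F_int s) (-1) \<noteq> 0" by simp
qed

lemma F_int_no_linear_factor:
  assumes "F_int s = a * b" "degree a = 1"
  shows False
proof -
  have "coeff a 1 * lead_coeff b = 1"
    using assms lead_coeff_mult[of a b] degree_F_int[of s] coeff_F_int(5)[of s] by simp
  then have a1: "coeff a 1 = 1 \<or> coeff a 1 = -1" by (auto simp: zmult_eq_1_iff)
  have "coeff a 0 * coeff b 0 = 1" using assms coeff_mult_0[of a b] coeff_F_int(1)[of s] by simp
  then have a0: "coeff a 0 = 1 \<or> coeff a 0 = -1" by (auto simp: zmult_eq_1_iff)
  define x where "x = - coeff a 0 * coeff a 1"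
  have "poly a x = coeff a 0 + coeff a 1 * x" using assms(2) by (simp add: poly_altdef)
  also have "\<dots> = 0" using a1 unfolding x_def by auto
  finally have "poly (F_int s) x = 0" using assms(1) by simp
  moreover have "x = 1 \<or> x = -1" using a0 a1 unfolding x_def by auto
  ultimately show False using F_int_no_unit_root[of s] by auto
qed

lemma F_int_quadratic_factor_coeffs:
  assumes "F_int s = a * b" "degree a = 2" "degree b = 2"
  shows "coeff a 0 * coeff b 0 = 1"
    and "coeff a 0 * coeff b 1 + coeff a 1 * coeff b 0 = 4"
    and "coeff a 0 * coeff b 2 + coeff a 1 * coeff b 1 + coeff a 2 * coeff b 0 = -6 * s^2 - 6"
    and "coeff a 1 * coeff b 2 + coeff a 2 * coeff b 1 = 4 * s^3 - 4 * s^2 + 8 * s - 4"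
    and "coeff a 2 * coeff b 2 = 1"
proof -
  have coeff_F: "coeff (F_int s) n = (\<Sum>i\<le>n. coeff a i * coeff b (n - i))" for n
    using assms(1) coeff_mult by metis
  have high: "coeff a n = 0" "coeff b n = 0" if "n > 2" for n
    using that assms(2,3) by (simp_all add: coeff_eq_0)
  show "coeff a 0 * coeff b 0 = 1"
    using coeff_F[of 0] coeff_F_int(1)[of s] by simp
  show "coeff a 0 * coeff b 1 + coeff a 1 * coeff b 0 = 4"
    using coeff_F[of 1] coeff_F_int(2)[of s] by simp
  show "coeff a 0 * coeff b 2 + coeff a 1 * coeff b 1 + coeff a 2 * coeff b 0 = -6 * s^2 - 6"
    using coeff_F[of 2] coeff_F_int(3)[of s] by (simp add: numeral_eq_Suc atMost_Suc)
  show "coeff a 1 * coeff b 2 + coeff a 2 * coeff b 1 = 4 * s^3 - 4 * s^2 + 8 * s - 4"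
    using coeff_F[of 3] coeff_F_int(4)[of s] high[of 3] by (simp add: numeral_eq_Suc atMost_Suc)
  show "coeff a 2 * coeff b 2 = 1"
    using coeff_F[of 4] coeff_F_int(5)[of s] high[of 3] high[of 4]
    by (simp add: numeral_eq_Suc atMost_Suc)
qed

lemma cubic_eq_unit:
  fixes s :: int
  shows "s^3 - s^2 + 2 * s - 1 = 1 \<Longrightarrow> s = 1" and "s^3 - s^2 + 2 * s - 1 = -1 \<Longrightarrow> s = 0"
proof -
  have factor1: "s^3 - s^2 + 2 * s - 1 - 1 = (s - 1) * (s^2 + 2)"
    and factor2: "s^3 - s^2 + 2 * s - 1 + 1 = s * (s^2 - s + 2)"
    by (simp_all add: algebra_simps power2_eq_square power3_eq_cube)
  have "s^2 + 2 \<noteq> 0" using zero_le_power2[of s] by linarith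
  then show "s = 1" if "s^3 - s^2 + 2 * s - 1 = 1"
    using factor1[unfolded that] by simp
  have "s^2 - s + 2 \<noteq> 0" using int_le_square[of s] by linarith
  then show "s = 0" if "s^3 - s^2 + 2 * s - 1 = -1"
    using factor2[unfolded that] by simp
qed

lemma F_int_no_quadratic_factor:
  assumes k: "k^2 = 3 * s^2 - 4 * s + 4" and "F_int s = a * b" "degree a = 2" "degree b = 2"
  shows False
proof -
  note E = F_int_quadratic_factor_coeffs[OF assms(2-4)]
  define u v where "u = coeff a 0" and "v = coeff a 2"
  have u: "coeff b 0 = u" "u = 1 \<or> u = -1"
    using E(1) unfolding u_def by (auto simp: zmult_eq_1_iff)
  have v: "coeff b 2 = v" "v = 1 \<or> v = -1"
    using E(5) unfolding v_def by (auto simp: zmult_eq_1_iff)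
  have "u * (coeff a 1 + coeff b 1) = 4" using E(2) u(1) unfolding u_def by (simp add: algebra_simps)
  then have sum: "coeff a 1 + coeff b 1 = 4 * u" using u(2) by auto
  have "4 * s^3 - 4 * s^2 + 8 * s - 4 = v * (coeff a 1 + coeff b 1)"
    using E(4) v(1) unfolding v_def by (simp add: algebra_simps)
  also have "\<dots> = 4 * (u * v)" using sum by simp
  finally have cubic: "s^3 - s^2 + 2 * s - 1 = u * v" by linarith
  have "u * v = 1 \<or> u * v = -1" using u(2) v(2) by auto
  then show False
  proof
    assume "u * v = 1"
    then have "s^3 - s^2 + 2 * s - 1 = 1" using cubic by simp
    then have "s = 1" by (rule cubic_eq_unit(1))
    then have "k^2 = 3" using k by simp
    then show False using no_square_between_consecutive_squares[of 1 k] by simp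
  next
    assume "u * v = -1"
    then have "s^3 - s^2 + 2 * s - 1 = -1" using cubic by simp
    then have "s = 0" by (rule cubic_eq_unit(2))
    then have "coeff a 1 * coeff b 1 = -4"
      using E(3) u(1) v(1) \<open>u * v = -1\<close> unfolding u_def v_def by (simp add: algebra_simps)
    have "(coeff a 1 - coeff b 1)^2 = (coeff a 1 + coeff b 1)^2 - 4 * (coeff a 1 * coeff b 1)"
      by (simp add: power2_eq_square algebra_simps)
    also have "\<dots> = 32" using sum \<open>coeff a 1 * coeff b 1 = -4\<close> u(2) by auto
    finally show False
      using no_square_between_consecutive_squares[of 5 "coeff a 1 - coeff b 1"] by simp
  qed
qed

lemma F_int_factor_degree:
  assumes "k^2 = 3 * s^2 - 4 * s + 4" "F_int s = a * b"
  shows "degree a = 0 \<or> degree b = 0"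
proof (rule ccontr)
  assume "\<not> (degree a = 0 \<or> degree b = 0)"
  moreover have "degree a + degree b = 4"
    using assms(2) degree_mult_eq[of a b] degree_F_int[of s] by fastforce
  ultimately consider "degree a = 1" | "degree b = 1" | "degree a = 2" "degree b = 2" by linarith
  then show False
    using F_int_no_linear_factor[of s a b] F_int_no_linear_factor[of s b a]
      F_int_no_quadratic_factor[OF assms] assms(2) by (cases, auto simp: mult.commute)
qed

lemma irreducible_F_rat:
  assumes "k^2 = 3 * s^2 - 4 * s + 4"
  shows "irreducible (F_rat s)"
proof (rule irreducibleI)
  show "F_rat s \<noteq> 0" "\<not> is_unit (F_rat s)"
    using degree_F_rat[of s] by (auto simp: is_unit_iff_degree)
  fix a b assume "F_rat s = a * b"
  then obtain a' b' where "F_int s = a' * b'" "degree a' = degree a" "degree b' = degree b"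
    using rat_to_int_factor[of "F_int s" a b] by (auto simp: F_rat_def)
  then have "degree a = 0 \<or> degree b = 0" using F_int_factor_degree[OF assms] by metis
  moreover have "a \<noteq> 0" "b \<noteq> 0" using \<open>F_rat s = a * b\<close> \<open>F_rat s \<noteq> 0\<close> by auto
  ultimately show "is_unit a \<or> is_unit b" by (auto simp: is_unit_iff_degree)
qed

section \<open>The Moebius map permuting the roots of \<open>F\<^sub>s\<close>\<close>

text \<open>The map \<open>M\<close> of the theorem, written with \<open>k = \<surd>(3s\<^sup>2 - 4s + 4)\<close>, so that \<open>f = (s + k)/2\<close>,
  \<open>g = (s - k)/2\<close> and \<open>(f\<^sup>2 + g\<^sup>2)/2 = s\<^sup>2 - s + 1\<close>.\<close>

definition moebius_F :: "int \<Rightarrow> int \<Rightarrow> complex \<Rightarrow> complex" where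
  "moebius_F s k = moebius ((of_int s + of_int k) / 2) (-1) (of_int (s^2 - s + 1))
     (- (of_int s - of_int k) / 2)"

text \<open>The square of \<open>moebius_F\<close> on the roots: the square of its matrix is \<open>k/2\<close> times this
  matrix, whose own square is \<open>-k\<^sup>2\<close> times the identity.\<close>

definition involution_F :: "int \<Rightarrow> complex \<Rightarrow> complex" where
  "involution_F s = moebius (of_int s) (-2) (2 * of_int (s^2 - s + 1)) (- of_int s)"

lemma subfield_moebius_F: "is_subfield K \<Longrightarrow> z \<in> K \<Longrightarrow> moebius_F s k z \<in> K"
  unfolding moebius_F_def by (rule subfield_moebius) simp_all

lemma Gal_moebius_F:
  "is_subfield K \<Longrightarrow> \<sigma> \<in> Gal K \<Longrightarrow> z \<in> K \<Longrightarrow> \<sigma> (moebius_F s k z) = moebius_F s k (\<sigma> z)"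
  unfolding moebius_F_def by (rule Gal_moebius) simp_all

lemma F_has_root: "\<exists>r. poly (F s) r = 0"
  by (rule fundamental_theorem_of_algebra_alt) (simp add: F_def)

text \<open>\<open>(c x + d)\<^sup>4 F\<^sub>s(M x) = -(K\<^sup>4/4) F\<^sub>s(x)\<close>, with the denominators of \<open>F\<^sub>s(M x)\<close> cleared.\<close>

lemma poly_F_moebius_identity:
  fixes S K f d c x :: complex
  assumes "K^2 = 3 * S^2 - 4 * S + 4" "f = (S + K) / 2" "d = - (S - K) / 2" "c = S^2 - S + 1"
  shows "(c * x + d)^4 + 4 * (f * x - 1) * (c * x + d)^3
      + (-6 * S^2 - 6) * (f * x - 1)^2 * (c * x + d)^2
      + (4 * S^3 - 4 * S^2 + 8 * S - 4) * (f * x - 1)^3 * (c * x + d) + (f * x - 1)^4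
    = - (K^4 / 4) * (1 + 4 * x + (-6 * S^2 - 6) * x^2 + (4 * S^3 - 4 * S^2 + 8 * S - 4) * x^3 + x^4)"
  using assms by Groebner_Basis.algebra

context
  fixes s k :: int
  assumes k: "k^2 = 3 * s^2 - 4 * s + 4"
begin

lemma k_nonzero: "k \<noteq> 0"
proof
  assume "k = 0"
  then have "3 * s^2 - 4 * s + 4 = 0" using k by simp
  moreover have "3 * s^2 - 4 * s + 4 = 2 * s^2 + (s - 2)^2"
    by (simp add: power2_eq_square algebra_simps)
  moreover have "s^2 > 0 \<or> (s - 2)^2 > 0" by (cases "s = 0") simp_all
  ultimately show False using zero_le_power2[of s] zero_le_power2[of "s - 2"] by linarith
qed

lemma k_squared: "(of_int k :: complex)^2 = 3 * (of_int s)^2 - 4 * of_int s + 4"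
  using arg_cong[OF k, of "of_int :: int \<Rightarrow> complex"] by simp

lemma root_F_degree: "poly (F s) x = 0 \<Longrightarrow> poly_rat p x = 0 \<Longrightarrow> p \<noteq> 0 \<Longrightarrow> 4 \<le> degree p"
  using degree_le_if_poly_rat_root[OF irreducible_F_rat[OF k]] degree_F_rat
  by (simp add: poly_F_eq_poly_rat)

lemma root_F_not_Rats: "poly (F s) x = 0 \<Longrightarrow> x \<notin> \<rat>"
proof
  assume x: "poly (F s) x = 0" and "x \<in> \<rat>"
  then obtain q where "x = of_rat q" by (auto elim: Rats_cases)
  then have "poly_rat [:- q, 1:] x = 0" by (simp add: of_rat_minus)
  from root_F_degree[OF x this] show False by simp
qed

lemma root_F_quadratic: "poly (F s) x = 0 \<Longrightarrow> of_int (s^2 - s + 1) * x^2 - of_int s * x + 1 \<noteq> 0"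
proof
  assume x: "poly (F s) x = 0" and "of_int (s^2 - s + 1) * x^2 - of_int s * x + 1 = 0"
  then have "poly_rat [:1, - of_int s, of_int (s^2 - s + 1):] x = 0"
    by (simp add: of_rat_minus of_rat_add of_rat_diff of_rat_mult of_rat_power algebra_simps
        power2_eq_square)
  moreover have "degree [:1, - of_int s, of_int (s^2 - s + 1) :: rat:] \<le> 2"
    using degree_pCons_le[of 1 "[:- of_int s, of_int (s^2 - s + 1) :: rat:]"]
      degree_pCons_le[of "- of_int s" "[:of_int (s^2 - s + 1) :: rat:]"] by simp
  ultimately show False using root_F_degree[OF x] by fastforce
qed

lemma root_F_denominators:
  assumes "poly (F s) x = 0"
  shows "of_int (s^2 - s + 1) * x + - (of_int s - of_int k) / 2 \<noteq> 0"
    and "2 * of_int (s^2 - s + 1) * x + - of_int s \<noteq> 0"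
proof -
  have "s^2 - s + 1 \<noteq> 0" using int_le_square[of s] by linarith
  then have c: "(of_int (s^2 - s + 1) :: complex) \<noteq> 0" "2 * (of_int (s^2 - s + 1) :: complex) \<noteq> 0"
    by (metis of_int_eq_0_iff, metis of_int_eq_0_iff mult_eq_0_iff zero_neq_numeral)
  show "of_int (s^2 - s + 1) * x + - (of_int s - of_int k) / 2 \<noteq> 0"
    by (rule Rats_affine_nonzero[OF root_F_not_Rats[OF assms] _ _ c(1)]) simp_all
  show "2 * of_int (s^2 - s + 1) * x + - of_int s \<noteq> 0"
    by (rule Rats_affine_nonzero[OF root_F_not_Rats[OF assms] _ _ c(2)]) simp_all
qed


lemma poly_F_expand:
  "poly (F s) z = 1 + 4 * z + (-6 * (of_int s)^2 - 6) * z^2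
    + (4 * (of_int s)^3 - 4 * (of_int s)^2 + 8 * of_int s - 4) * z^3 + z^4"
  by (simp add: F_def algebra_simps power2_eq_square power3_eq_cube power4_eq_xxxx)

lemma root_F_moebius_F:
  assumes x: "poly (F s) x = 0"
  shows "poly (F s) (moebius_F s k x) = 0"
proof -
  define f d c :: complex where "f = (of_int s + of_int k) / 2" and "d = - (of_int s - of_int k) / 2"
    and "c = of_int (s^2 - s + 1)"
  define m where "m = moebius_F s k x"
  have D: "c * x + d \<noteq> 0" unfolding c_def d_def by (rule root_F_denominators(1)[OF x])
  have "m = (f * x + - 1) / (c * x + d)"
    unfolding m_def moebius_F_def moebius_def f_def d_def c_def ..
  then have m: "m * (c * x + d) = f * x - 1" using D by simp
  have "poly (F s) m * (c * x + d)^4 = (c * x + d)^4 + 4 * (m * (c * x + d)) * (c * x + d)^3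
      + (-6 * (of_int s)^2 - 6) * (m * (c * x + d))^2 * (c * x + d)^2
      + (4 * (of_int s)^3 - 4 * (of_int s)^2 + 8 * of_int s - 4) * (m * (c * x + d))^3 * (c * x + d)
      + (m * (c * x + d))^4"
    unfolding poly_F_expand by Groebner_Basis.algebra
  also have "\<dots> = - ((of_int k)^4 / 4) * poly (F s) x"
    unfolding m poly_F_expand
    by (rule poly_F_moebius_identity[OF k_squared f_def d_def]) (simp add: c_def)
  finally show ?thesis using x D by (simp add: m_def)
qed

lemma moebius_F_twice:
  assumes x: "poly (F s) x = 0"
  shows "moebius_F s k (moebius_F s k x) = involution_F s x"
proof -
  define f d c h :: complex where "f = (of_int s + of_int k) / 2" and "d = - (of_int s - of_int k) / 2"
    and "c = of_int (s^2 - s + 1)" and "h = of_int k / 2"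
  have hyps: "2 * f = of_int s + of_int k" "2 * d = of_int k - of_int s" "2 * h = of_int k"
      "c = (of_int s)^2 - of_int s + 1" "(of_int k :: complex)^2 = 3 * (of_int s)^2 - 4 * of_int s + 4"
    by (simp_all add: f_def d_def c_def h_def k_squared)
  have e1: "f * f + (- 1) * c = h * of_int s"
    and e2: "f * (- 1) + (- 1) * d = h * (- 2)"
    and e3: "c * f + d * c = h * (2 * c)"
    and e4: "c * (- 1) + d * d = h * (- of_int s)"
    using hyps by Groebner_Basis.algebra+
  have "moebius_F s k (moebius_F s k x)
      = moebius (f * f + (- 1) * c) (f * (- 1) + (- 1) * d) (c * f + d * c) (c * (- 1) + d * d) x"
    unfolding moebius_F_def f_def d_def c_def
    by (rule moebius_moebius[OF root_F_denominators(1)[OF x]])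
  also have "\<dots> = moebius (h * of_int s) (h * (- 2)) (h * (2 * c)) (h * (- of_int s)) x"
    by (simp only: e1 e2 e3 e4)
  also have "\<dots> = moebius (of_int s) (- 2) (2 * c) (- of_int s) x"
    using k_nonzero by (intro fun_cong[OF moebius_scale]) (simp add: h_def)
  also have "\<dots> = involution_F s x"
    unfolding involution_F_def c_def ..
  finally show ?thesis .
qed


lemma involution_F_twice:
  assumes x: "poly (F s) x = 0"
  shows "involution_F s (involution_F s x) = x"
proof -
  define c l :: complex where "c = of_int (s^2 - s + 1)" and "l = - ((of_int k)^2)"
  have hyps: "c = (of_int s)^2 - of_int s + 1" "l = - ((of_int k)^2)"
      "(of_int k :: complex)^2 = 3 * (of_int s)^2 - 4 * of_int s + 4"
    by (simp_all add: c_def l_def k_squared)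
  have e1: "of_int s * of_int s + (- 2) * (2 * c) = l"
    using hyps by Groebner_Basis.algebra
  have e2: "of_int s * (- 2) + (- 2) * (- of_int s) = (0 :: complex)"
    by Groebner_Basis.algebra
  have e3: "2 * c * of_int s + (- of_int s) * (2 * c) = 0"
    by Groebner_Basis.algebra
  have e4: "2 * c * (- 2) + (- of_int s) * (- of_int s) = l"
    using hyps by Groebner_Basis.algebra
  have "involution_F s (involution_F s x) =
      moebius (of_int s * of_int s + (- 2) * (2 * c)) (of_int s * (- 2) + (- 2) * (- of_int s))
        (2 * c * of_int s + (- of_int s) * (2 * c)) (2 * c * (- 2) + (- of_int s) * (- of_int s)) x"
    unfolding involution_F_def c_def by (rule moebius_moebius[OF root_F_denominators(2)[OF x]])
  also have "\<dots> = moebius l 0 0 l x" by (simp only: e1 e2 e3 e4)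
  also have "\<dots> = x" using k_nonzero by (simp add: moebius_def l_def)
  finally show ?thesis .
qed

lemma moebius_F_no_fixed_point:
  assumes x: "poly (F s) x = 0"
  shows "moebius_F s k x \<noteq> x"
proof
  define f d c :: complex where "f = (of_int s + of_int k) / 2" and "d = - (of_int s - of_int k) / 2"
    and "c = of_int (s^2 - s + 1)"
  assume "moebius_F s k x = x"
  then have "c * x^2 + (d - f) * x - (- 1) = 0"
    unfolding f_def d_def c_def moebius_F_def
    by (rule moebius_fixed_point[OF root_F_denominators(1)[OF x]])
  moreover have "d - f = - of_int s" by (simp add: d_def f_def field_simps)
  ultimately have "c * x^2 - of_int s * x + 1 = 0" by simp
  then show False using root_F_quadratic[OF x] by (simp add: c_def)
qed

lemma involution_F_no_fixed_point:
  assumes x: "poly (F s) x = 0"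
  shows "involution_F s x \<noteq> x"
proof
  define c :: complex where "c = of_int (s^2 - s + 1)"
  assume "involution_F s x = x"
  then have "2 * c * x^2 + (- of_int s - of_int s) * x - (- 2) = 0"
    unfolding c_def involution_F_def
    by (rule moebius_fixed_point[OF root_F_denominators(2)[OF x]])
  moreover have "2 * c * x^2 + (- of_int s - of_int s) * x - (- 2) = 2 * (c * x^2 - of_int s * x + 1)"
    by (simp add: algebra_simps)
  ultimately have "2 * (c * x^2 - of_int s * x + 1) = 0" by metis
  then have "c * x^2 - of_int s * x + 1 = 0" by (metis mult_eq_0_iff zero_neq_numeral)
  then show False using root_F_quadratic[OF x] by (simp add: c_def)
qed

lemma root_F_funpow_moebius_F: "poly (F s) x = 0 \<Longrightarrow> poly (F s) ((moebius_F s k ^^ n) x) = 0"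
  by (induction n) (simp_all add: root_F_moebius_F)

lemma funpow_moebius_F_4:
  assumes x: "poly (F s) x = 0"
  shows "(moebius_F s k ^^ 4) x = x"
proof -
  have "(moebius_F s k ^^ 4) x = moebius_F s k (moebius_F s k (moebius_F s k (moebius_F s k x)))"
    by (simp add: numeral_eq_Suc)
  also have "\<dots> = involution_F s (involution_F s x)"
    using moebius_F_twice[OF x] moebius_F_twice[OF root_F_moebius_F[OF root_F_moebius_F[OF x]]]
    by simp
  also have "\<dots> = x" by (rule involution_F_twice[OF x])
  finally show ?thesis .
qed

lemma funpow_moebius_F_no_fixed_point:
  assumes x: "poly (F s) x = 0" and n: "0 < n" "n < 4"
  shows "(moebius_F s k ^^ n) x \<noteq> x"
proof -
  consider "n = 1" | "n = 2" | "n = 3" using n by linarith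
  then show ?thesis
  proof cases
    case 1
    then show ?thesis using moebius_F_no_fixed_point[OF x] by simp
  next
    case 2
    then show ?thesis using moebius_F_twice[OF x] involution_F_no_fixed_point[OF x]
      by (simp add: numeral_eq_Suc)
  next
    case 3
    have "moebius_F s k ((moebius_F s k ^^ 3) x) = x"
      using funpow_moebius_F_4[OF x] by (simp add: numeral_eq_Suc)
    with 3 show ?thesis using moebius_F_no_fixed_point[OF x] by auto
  qed
qed

lemma inj_on_moebius_F_orbit:
  assumes x: "poly (F s) x = 0"
  shows "inj_on (\<lambda>n. (moebius_F s k ^^ n) x) {..<4}"
proof (rule linorder_inj_onI)
  fix i j :: nat assume "i < j" "i \<in> {..<4}" "j \<in> {..<4}"
  then have "(moebius_F s k ^^ (j - i)) ((moebius_F s k ^^ i) x) \<noteq> (moebius_F s k ^^ i) x"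
    by (intro funpow_moebius_F_no_fixed_point root_F_funpow_moebius_F x) auto
  moreover have "(moebius_F s k ^^ j) x = (moebius_F s k ^^ (j - i) \<circ> moebius_F s k ^^ i) x"
    using \<open>i < j\<close> by (simp add: funpow_add[symmetric])
  ultimately show "(moebius_F s k ^^ i) x \<noteq> (moebius_F s k ^^ j) x" by simp
qed auto

lemma roots_F_eq_orbit:
  assumes x: "poly (F s) x = 0"
  shows "{z. poly (F s) z = 0} = (\<lambda>n. (moebius_F s k ^^ n) x) ` {..<4}"
proof -
  have F0: "F s \<noteq> 0" by (simp add: F_def)
  have sub: "(\<lambda>n. (moebius_F s k ^^ n) x) ` {..<4} \<subseteq> {z. poly (F s) z = 0}"
    using root_F_funpow_moebius_F[OF x] by auto
  have "card ((\<lambda>n. (moebius_F s k ^^ n) x) ` {..<4}) = 4"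
    by (simp add: card_image inj_on_moebius_F_orbit[OF x])
  moreover have "card {z. poly (F s) z = 0} \<le> 4"
    using card_poly_roots_bound[OF F0] by (simp add: F_def)
  ultimately show ?thesis
    using card_subset_eq[OF poly_roots_finite[OF F0] sub] card_mono[OF poly_roots_finite[OF F0] sub]
    by simp
qed

lemma gen_field_root_F:
  assumes x: "poly (F s) x = 0"
  shows "gen_field {x} = splitting_field (F s)"
proof
  show "gen_field {x} \<subseteq> splitting_field (F s)"
    unfolding splitting_field_def using x by (intro gen_field_mono) simp
  have K: "is_subfield (gen_field {x})"
    using is_subfield_root_field[OF irreducible_F_rat[OF k]] x by (simp add: poly_F_eq_poly_rat)
  have "(moebius_F s k ^^ n) x \<in> gen_field {x}" for n
    using subset_gen_field[of "{x}"] subfield_moebius_F[OF K] by (induction n) auto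
  then show "splitting_field (F s) \<subseteq> gen_field {x}"
    unfolding splitting_field_def roots_F_eq_orbit[OF x] by (intro gen_field_least[OF K]) auto
qed


lemma card_Gal_F: "card (Gal (splitting_field (F s))) = 4"
proof -
  obtain r where r: "poly (F s) r = 0" using F_has_root by blast
  have roots: "{y. poly_rat (F_rat s) y = 0} = {y. poly (F s) y = 0}"
    by (simp add: poly_F_eq_poly_rat)
  have "card (Gal (gen_field {r})) = card {y. poly_rat (F_rat s) y = 0}"
    using r gen_field_root_F by (intro card_Gal_root_field irreducible_F_rat[OF k])
      (simp_all add: poly_F_eq_poly_rat[symmetric])
  also have "\<dots> = 4"
    unfolding roots roots_F_eq_orbit[OF r] by (simp add: card_image inj_on_moebius_F_orbit[OF r])
  finally show ?thesis by (simp add: gen_field_root_F[OF r])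
qed

lemma root_aut_moebius_F:
  assumes r: "poly (F s) r = 0"
  shows "root_aut r (moebius_F s k r) \<in> Gal (splitting_field (F s))" (is "?\<sigma> \<in> Gal ?K")
    and "poly (F s) y = 0 \<Longrightarrow> root_aut r (moebius_F s k r) y = moebius_F s k y"
proof -
  let ?M = "moebius_F s k"
  have r': "poly_rat (F_rat s) r = 0" using r by (simp add: poly_F_eq_poly_rat)
  note irreducible = irreducible_F_rat[OF k]
  have K: "?K = gen_field {r}" by (simp add: gen_field_root_F[OF r])
  have subfield: "is_subfield ?K" unfolding K by (rule is_subfield_root_field[OF irreducible r'])
  show \<sigma>_Gal: "?\<sigma> \<in> Gal ?K"
    unfolding K using root_F_moebius_F[OF r]
    by (intro root_aut_in_Gal[OF irreducible r'])
      (simp_all add: poly_F_eq_poly_rat[symmetric] gen_field_root_F r)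
  have in_K: "(?M ^^ n) r \<in> ?K" for n
    using root_F_funpow_moebius_F[OF r] by (simp add: splitting_field_def subset_gen_field[THEN subsetD])
  have orbit: "?\<sigma> ((?M ^^ n) r) = (?M ^^ Suc n) r" for n
  proof (induction n)
    case 0
    show ?case using root_F_moebius_F[OF r]
      by (simp add: root_aut_root[OF irreducible r'] poly_F_eq_poly_rat)
  next
    case (Suc n)
    then show ?case using Gal_moebius_F[OF subfield \<sigma>_Gal in_K[of n]] by simp
  qed
  assume "poly (F s) y = 0"
  then obtain n where "y = (?M ^^ n) r" using roots_F_eq_orbit[OF r] by blast
  then show "?\<sigma> y = ?M y" using orbit by simp
qed

lemma Gal_F_generator:
  "\<exists>\<sigma>\<in>Gal (splitting_field (F s)). Gal (splitting_field (F s)) = range (\<lambda>n. \<sigma> ^^ n) \<and>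
     (\<forall>r. poly (F s) r = 0 \<longrightarrow> \<sigma> r = moebius_F s k r)"
proof -
  let ?M = "moebius_F s k" and ?K = "splitting_field (F s)"
  obtain r where r: "poly (F s) r = 0" using F_has_root by blast
  define \<sigma> where "\<sigma> = root_aut r (?M r)"
  note \<sigma>_Gal = root_aut_moebius_F(1)[OF r, folded \<sigma>_def]
    and \<sigma>_roots = root_aut_moebius_F(2)[OF r, folded \<sigma>_def]
  have powers: "(\<sigma> ^^ n) r = (?M ^^ n) r" for n
    by (induction n) (simp_all add: \<sigma>_roots root_F_funpow_moebius_F[OF r])
  have "inj_on (\<lambda>n. \<sigma> ^^ n) {..<4}"
    using inj_on_moebius_F_orbit[OF r] by (auto simp: inj_on_def powers dest: fun_cong[where x = r])
  moreover have sub: "range (\<lambda>n. \<sigma> ^^ n) \<subseteq> Gal ?K" using Gal_funpow[OF \<sigma>_Gal] by auto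
  moreover have "finite (Gal ?K)" using card_Gal_F by (intro card_ge_0_finite) simp
  ultimately have "(\<lambda>n. \<sigma> ^^ n) ` {..<4} = Gal ?K"
    using card_Gal_F by (intro card_subset_eq) (auto simp: card_image)
  then have "Gal ?K = range (\<lambda>n. \<sigma> ^^ n)" using sub by blast
  then show ?thesis using \<sigma>_Gal \<sigma>_roots by blast
qed

end

lemma moebius_F_eq_sqrt_form:
  fixes s k :: int
  assumes k: "k^2 = 3 * s^2 - 4 * s + 4" "0 \<le> k"
  defines "f \<equiv> (real_of_int s + sqrt (real_of_int (3 * s^2 - 4 * s + 4))) / 2"
    and "g \<equiv> (real_of_int s - sqrt (real_of_int (3 * s^2 - 4 * s + 4))) / 2"
  shows "moebius_F s k \<theta> = (of_real f * \<theta> - 1) / (of_real ((f^2 + g^2) / 2) * \<theta> - of_real g)"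
proof -
  have "sqrt (real_of_int (3 * s^2 - 4 * s + 4)) = real_of_int k"
    unfolding k(1)[symmetric] using k(2) by simp
  then have f: "f = (real_of_int s + real_of_int k) / 2" and g: "g = (real_of_int s - real_of_int k) / 2"
    unfolding f_def g_def by simp_all
  have "(f^2 + g^2) / 2 = ((real_of_int s)^2 + (real_of_int k)^2) / 4"
    unfolding f g by (simp add: field_simps power2_eq_square)
  also have "\<dots> = real_of_int (s^2 - s + 1)"
    using arg_cong[OF k(1), of real_of_int] by simp
  finally have c: "(f^2 + g^2) / 2 = real_of_int (s^2 - s + 1)" .
  show ?thesis
    unfolding c unfolding f g moebius_F_def moebius_def by simp
qed

theorem mainTheorem5:
  fixes s :: int
  assumes sq: "\<exists>k::int. 3*s^2 - 4*s + 4 = k^2"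
  defines "f \<equiv> (real_of_int s + sqrt (real_of_int (3*s^2 - 4*s + 4))) / 2"
      and "g \<equiv> (real_of_int s - sqrt (real_of_int (3*s^2 - 4*s + 4))) / 2"
  defines "M \<equiv> (\<lambda>\<theta>::complex. (of_real f * \<theta> - 1) /
                   (of_real ((f^2 + g^2) / 2) * \<theta> - of_real g))"
  defines "K \<equiv> splitting_field (F s)"
  shows "card (Gal K) = 4 \<and> (\<exists>\<tau>\<in>Gal K. Gal K = range (\<lambda>n. \<tau> ^^ n)) \<and>
         (\<forall>r. poly (F s) r = 0 \<longrightarrow> K = gen_field {r}) \<and>
         (\<exists>\<sigma>\<in>Gal K. Gal K = range (\<lambda>n. \<sigma> ^^ n) \<and>
           (\<forall>r. poly (F s) r = 0 \<longrightarrow> \<sigma> r = M r))"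
proof -
  obtain k0 where "3 * s^2 - 4 * s + 4 = k0^2" using sq by blast
  then have k: "\<bar>k0\<bar>^2 = 3 * s^2 - 4 * s + 4" "0 \<le> \<bar>k0\<bar>" by simp_all
  have "M = moebius_F s \<bar>k0\<bar>"
    using moebius_F_eq_sqrt_form[OF k] by (simp add: fun_eq_iff M_def f_def g_def)
  then obtain \<sigma> where "\<sigma> \<in> Gal K" "Gal K = range (\<lambda>n. \<sigma> ^^ n)"
    "\<forall>r. poly (F s) r = 0 \<longrightarrow> \<sigma> r = M r"
    using Gal_F_generator[OF k(1)] unfolding K_def by blast
  moreover have "\<forall>r. poly (F s) r = 0 \<longrightarrow> K = gen_field {r}"
    using gen_field_root_F[OF k(1)] by (simp add: K_def)
  ultimately show ?thesis using card_Gal_F[OF k(1)] unfolding K_def by blast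
qed

end
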